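(* Let $X$ be a random variable taking values in $[0,1]$ with law $P$, and let $\widehat X\in[0,1)$ be a nonrandom number. Then for every $\xi\in[-1,1]$, \[ \mathbb{E}_P\exp\left\{\xi\,(X-\mathbb{E}_P[X])-\xi^2\,\psi_E(|X-\widehat X|)\right\}\le 1 . \]
   Context: $\psi_E(x)=-\log(1-x)-x$ for $x\in[0,1)$, and $\psi_E(1):=+\infty$. Conventions: $0\cdot(+\infty)=0$ and $\exp(-\infty)=0$. *)

theory Defs
  imports "HOL-Probability.Probability"
begin

text \<open>psi_E(x) = -log(1-x) - x for x in [0,1), and psi_E(1) = +infinity.
  Extended-real valued; arguments outside [0,1] never occur in the statement.\<close>
definition psiE :: "real \<Rightarrow> ereal" where
  "psiE x = (if x < 1 then ereal (- ln (1 - x) - x) else PInfty)"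

text \<open>Exponential on the extended reals with exp(-infinity) = 0
  (the value at +infinity is irrelevant: it never occurs).\<close>
definition expE :: "ereal \<Rightarrow> real" where
  "expE e = (if e = MInfty then 0 else exp (real_of_ereal e))"

end

theory Submission
  imports Defs
begin

text \<open>Extend \<open>\<psi>\<^sub>E\<close> to \<open>\<psi>(x) = -ln(1 - x) - x = \<Sum>\<^bsub>k \<ge> 2\<^esub> x\<^sup>k/k\<close> on \<open>(-1, 1)\<close>. Comparing these series
  termwise gives \<open>\<psi>(u) \<le> \<psi>(\<bar>u\<bar>)\<close>, hence \<open>u - \<psi>(\<bar>u\<bar>) \<le> u - \<psi>(-u) = ln(1 + u)\<close>, and
  \<open>\<psi>(t s) \<le> t\<^sup>2 \<psi>(s)\<close> for \<open>t \<in> [0,1]\<close>. With \<open>u = \<xi> (X - Xhat)\<close> this bounds the integrand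
  by the affine function \<open>(1 + \<xi> (X - Xhat)) exp(\<xi> (Xhat - E X))\<close> of \<open>X\<close>, whose expectation
  is \<open>(1 + a) exp(-a) \<le> 1\<close> with \<open>a = \<xi> (E X - Xhat)\<close>.\<close>

definition psi :: "real \<Rightarrow> real" where
  "psi x = - ln (1 - x) - x"

lemma psiE_eq_psi: "x < 1 \<Longrightarrow> psiE x = ereal (psi x)"
  by (simp add: psiE_def psi_def)

lemma psi_sums:
  fixes x :: real
  assumes "\<bar>x\<bar> < 1"
  shows "(\<lambda>n. x ^ (n + 2) / real (n + 2)) sums psi x"
proof -
  have "(\<lambda>n. - ((- (- x)) ^ n) / real n) sums ln (1 + - x)"
    by (rule ln_series') (use assms in simp)
  then have "(\<lambda>n. x ^ n / real n) sums (- ln (1 - x))"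
    using sums_minus by fastforce
  then have "(\<lambda>n. x ^ Suc n / real (Suc n)) sums (- ln (1 - x))"
    by (subst sums_Suc_iff) simp
  then have "(\<lambda>n. x ^ Suc (Suc n) / real (Suc (Suc n))) sums (- ln (1 - x) - x)"
    using sums_Suc_iff[of "\<lambda>n. x ^ Suc n / real (Suc n)"] by simp
  then show ?thesis
    by (simp add: psi_def)
qed

lemma psi_le_psi_abs:
  fixes x :: real
  assumes "\<bar>x\<bar> < 1"
  shows "psi x \<le> psi \<bar>x\<bar>"
proof (rule sums_le[OF _ psi_sums[OF assms] psi_sums])
  fix n
  have "x ^ (n + 2) \<le> \<bar>x\<bar> ^ (n + 2)"
    by (metis abs_ge_self power_abs)
  then show "x ^ (n + 2) / real (n + 2) \<le> \<bar>x\<bar> ^ (n + 2) / real (n + 2)"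
    by (simp add: divide_right_mono)
qed (use assms in simp)

lemma psi_mult_le:
  fixes t s :: real
  assumes "0 \<le> t" "t \<le> 1" "0 \<le> s" "s < 1"
  shows "psi (t * s) \<le> t\<^sup>2 * psi s"
proof (rule sums_le[OF _ psi_sums sums_mult[OF psi_sums]])
  fix n
  have "t ^ n \<le> 1"
    using assms by (simp add: power_le_one)
  then have "t ^ (n + 2) \<le> t\<^sup>2"
    using mult_left_mono[of "t ^ n" 1 "t\<^sup>2"] by (metis mult.commute mult_1_left power_add zero_le_power2)
  then have "t ^ (n + 2) * s ^ (n + 2) \<le> t\<^sup>2 * s ^ (n + 2)"
    using assms by (intro mult_right_mono) auto
  then show "(t * s) ^ (n + 2) / real (n + 2) \<le> t\<^sup>2 * (s ^ (n + 2) / real (n + 2))"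
    by (metis power_mult_distrib divide_right_mono of_nat_0_le_iff times_divide_eq_right)
next
  show "\<bar>t * s\<bar> < 1"
    using assms mult_left_le_one_le[of s t] by (simp add: abs_mult)
qed (use assms in simp)

lemma exp_diff_psi_abs_le:
  fixes u :: real
  assumes "\<bar>u\<bar> < 1"
  shows "exp (u - psi \<bar>u\<bar>) \<le> 1 + u"
proof -
  have "u - psi \<bar>u\<bar> \<le> u - psi (- u)"
    using psi_le_psi_abs[of "- u"] assms by simp
  also have "\<dots> = ln (1 + u)"
    by (simp add: psi_def)
  finally show ?thesis
    using assms by (metis abs_less_iff diff_gt_0_iff_gt diff_minus_eq_add exp_le_cancel_iff exp_ln)
qed

lemma expE_psiE_penalty_le:
  fixes x m h \<xi> :: real
  assumes "- 1 < x - h" "x - h \<le> 1" "\<bar>\<xi>\<bar> \<le> 1"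
  shows "expE (ereal (\<xi> * (x - m)) - ereal (\<xi>\<^sup>2) * psiE \<bar>x - h\<bar>)
           \<le> (1 + \<xi> * (x - h)) * exp (\<xi> * (h - m))"
proof (cases "x - h < 1")
  case True
  define u where "u = \<xi> * (x - h)"
  have abs_u: "\<bar>u\<bar> = \<bar>\<xi>\<bar> * \<bar>x - h\<bar>"
    by (simp add: u_def abs_mult)
  have "\<bar>u\<bar> < 1"
    using True assms mult_left_le_one_le[of "\<bar>x - h\<bar>" "\<bar>\<xi>\<bar>"] by (simp add: abs_u)
  have "psi \<bar>u\<bar> \<le> \<xi>\<^sup>2 * psi \<bar>x - h\<bar>"
    using True assms psi_mult_le[of "\<bar>\<xi>\<bar>" "\<bar>x - h\<bar>"] by (simp add: abs_u)
  then have "expE (ereal (\<xi> * (x - m)) - ereal (\<xi>\<^sup>2) * psiE \<bar>x - h\<bar>)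
               \<le> exp (u - psi \<bar>u\<bar>) * exp (\<xi> * (h - m))"
    using True assms
    by (simp add: psiE_eq_psi expE_def u_def flip: exp_add) (simp add: algebra_simps)
  also have "\<dots> \<le> (1 + u) * exp (\<xi> * (h - m))"
    using exp_diff_psi_abs_le[OF \<open>\<bar>u\<bar> < 1\<close>] by simp
  finally show ?thesis
    by (simp add: u_def)
next
  case False
  then have "x - h = 1" and "psiE \<bar>x - h\<bar> = PInfty"
    using assms by (auto simp: psiE_def)
  then show ?thesis
    using assms by (cases "\<xi> = 0") (auto simp: expE_def)
qed

lemma one_plus_times_exp_neg_le_one:
  fixes a :: real
  shows "(1 + a) * exp (- a) \<le> 1"
proof -
  have "(1 + a) * exp (- a) \<le> exp a * exp (- a)"
    by (intro mult_right_mono exp_ge_add_one_self) simp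
  then show ?thesis
    by (simp flip: exp_add)
qed

theorem mainTheorem2:
  fixes M :: "'a measure" and X :: "'a \<Rightarrow> real" and Xhat \<xi> :: real
  assumes "prob_space M"
    and "X \<in> borel_measurable M"
    and "\<And>\<omega>. \<omega> \<in> space M \<Longrightarrow> 0 \<le> X \<omega> \<and> X \<omega> \<le> 1"
    and "0 \<le> Xhat" and "Xhat < 1"
    and "-1 \<le> \<xi>" and "\<xi> \<le> 1"
  shows "(\<integral>\<omega>. expE (ereal (\<xi> * (X \<omega> - (\<integral>\<omega>'. X \<omega>' \<partial>M)))
                        - ereal (\<xi>\<^sup>2) * psiE \<bar>X \<omega> - Xhat\<bar>) \<partial>M) \<le> 1"
proof -
  interpret prob_space M by fact
  define m where "m = (\<integral>\<omega>. X \<omega> \<partial>M)"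
  define F where "F = (\<lambda>\<omega>. (1 + \<xi> * (X \<omega> - Xhat)) * exp (\<xi> * (Xhat - m)))"
  have "integrable M X"
    using assms(2,3) by (intro integrable_const_bound[where B = 1]) auto
  then have "integrable M F"
    by (simp add: F_def)
  have "(\<integral>\<omega>. expE (ereal (\<xi> * (X \<omega> - m)) - ereal (\<xi>\<^sup>2) * psiE \<bar>X \<omega> - Xhat\<bar>) \<partial>M)
          \<le> (\<integral>\<omega>. F \<omega> \<partial>M)"
  proof (rule integral_mono'[OF \<open>integrable M F\<close>])
    fix \<omega> assume "\<omega> \<in> space M"
    then have "- 1 < X \<omega> - Xhat" "X \<omega> - Xhat \<le> 1" "\<bar>\<xi>\<bar> \<le> 1"
      using assms(3)[of \<omega>] assms(4-7) by auto
    then show "expE (ereal (\<xi> * (X \<omega> - m)) - ereal (\<xi>\<^sup>2) * psiE \<bar>X \<omega> - Xhat\<bar>) \<le> F \<omega>"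
      unfolding F_def by (rule expE_psiE_penalty_le)
    have "\<bar>\<xi> * (X \<omega> - Xhat)\<bar> \<le> 1"
      unfolding abs_mult using \<open>\<bar>\<xi>\<bar> \<le> 1\<close> \<open>- 1 < X \<omega> - Xhat\<close> \<open>X \<omega> - Xhat \<le> 1\<close>
      by (intro mult_le_one) auto
    then show "0 \<le> F \<omega>"
      by (simp add: F_def abs_le_iff)
  qed
  also have "\<dots> = (1 + \<xi> * (m - Xhat)) * exp (- (\<xi> * (m - Xhat)))"
    using \<open>integrable M X\<close> by (simp add: F_def m_def prob_space algebra_simps)
  also have "\<dots> \<le> 1"
    by (rule one_plus_times_exp_neg_le_one)
  finally show ?thesis
    unfolding m_def .
qed

end
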